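(* Let $r\in\mathbb{Z}_{\ge0}$. Every character $\chi$ of $T$ of true depth $r$ is of the form $\chi=(\phi\circ\mathrm{det})\otimes\chi'$, where $\phi$ is a character of $E^1$ and $\chi'$ is a character of $T$ of minimal depth $r$.
   Context: Let $F$ be a non-archimedean local field with odd residual characteristic, ring of integers $\mathcal{O}_F$, maximal ideal $\mathfrak{p}_F$. Fix a non-square $\epsilon\in\mathcal{O}_F^\times$, $E=F[\sqrt\epsilon]$ with ring of integers $\mathcal{O}_E$, maximal ideal $\mathfrak{p}_E$; $\overline{x}$ is Galois conjugation; $E^1=\{x\in E^\times: x\overline x=1\}$. $G=\{g\in\mathrm{GL}_2(E):\overline{g}^{\top}\mathrm{w}g=\mathrm{w}\}$, $\mathrm{w}=\begin{pmatrix}0&1\\1&0\end{pmatrix}$; $\det(G)\subseteq E^1$. $T=\{t(a)=\mathrm{diag}(a,\overline a^{-1}):a\in E^\times\}$, $T_0=\{t(a):a\in\mathcal{O}_E^\times\}$, $T_n=\{t(a):a\in1+\mathfrak{p}_E^n\}$ ($n\ge1$); $S=\{\mathrm{diag}(a,a^{-1}):a\in F^\times\}$, $S_0$ ($a\in\mathcal{O}_F^\times$), $S_n$ ($a\in1+\mathfrak{p}_F^n$). A character $\chi$ of $T$ has depth $r\in\mathbb{Z}_{\ge0}$ if $\chi|_{T_r}\neq\mathbbm{1}$ and $\chi|_{T_{r+1}}=\mathbbm{1}$; a character trivial on $T_0$ is also said to have depth $0$. The true depth of $\chi$ is the depth of $\chi|_S$ (defined analogously with $S_n$). $\chi$ has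 minimal depth $r$ if its depth and true depth both equal $r$. *)

theory Defs
  imports Complex_Main
begin

(* v is the normalized valuation on F^x; its value at 0 is irrelevant. *)
definition pF :: "('a::field \<Rightarrow> int) \<Rightarrow> int \<Rightarrow> 'a set" where
  "pF v k = {x. x = 0 \<or> k \<le> v x}"   (* p_F^k ; pF v 0 = O_F *)

definition nonarch_local_field :: "('a::field \<Rightarrow> int) \<Rightarrow> bool" where
  "nonarch_local_field v \<longleftrightarrow>
     (\<forall>x y. x \<noteq> 0 \<longrightarrow> y \<noteq> 0 \<longrightarrow> v (x * y) = v x + v y) \<and>
     (\<forall>x y. x \<noteq> 0 \<longrightarrow> y \<noteq> 0 \<longrightarrow> x + y \<noteq> 0 \<longrightarrow> min (v x) (v y) \<le> v (x + y)) \<and>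
     (\<exists>\<pi>. \<pi> \<noteq> 0 \<and> v \<pi> = 1) \<and>
     (\<exists>R. finite R \<and> R \<subseteq> pF v 0 \<and> (\<forall>x\<in>pF v 0. \<exists>r\<in>R. x - r \<in> pF v 1)) \<and>
     (\<forall>s::nat \<Rightarrow> 'a. (\<forall>k. \<exists>N. \<forall>m\<ge>N. \<forall>n\<ge>N. s m - s n \<in> pF v k) \<longrightarrow>
          (\<exists>L. \<forall>k. \<exists>N. \<forall>n\<ge>N. s n - L \<in> pF v k))"

(* odd residual characteristic: 2 is a unit of O_F *)
definition odd_residual_char :: "('a::field \<Rightarrow> int) \<Rightarrow> bool" where
  "odd_residual_char v \<longleftrightarrow> (2::'a) \<noteq> 0 \<and> v 2 = 0"

section \<open>E = F[sqrt eps], elements (x,y) standing for x + y sqrt eps\<close>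

definition emult :: "'a::field \<Rightarrow> 'a \<times> 'a \<Rightarrow> 'a \<times> 'a \<Rightarrow> 'a \<times> 'a" where
  "emult eps z w = (fst z * fst w + eps * snd z * snd w, fst z * snd w + snd z * fst w)"

definition econj :: "'a::field \<times> 'a \<Rightarrow> 'a \<times> 'a" where
  "econj z = (fst z, - snd z)"

definition enorm :: "'a::field \<Rightarrow> 'a \<times> 'a \<Rightarrow> 'a" where
  "enorm eps z = fst z * fst z - eps * snd z * snd z"

definition einv :: "'a::field \<Rightarrow> 'a \<times> 'a \<Rightarrow> 'a \<times> 'a" where
  "einv eps z = (fst z / enorm eps z, - snd z / enorm eps z)"

definition E1 :: "'a::field \<Rightarrow> ('a \<times> 'a) set" where
  "E1 eps = {z. enorm eps z = 1}"

(* p_E^k  (E/F unramified, O_E = O_F[sqrt eps]) *)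
definition pE :: "('a::field \<Rightarrow> int) \<Rightarrow> int \<Rightarrow> ('a \<times> 'a) set" where
  "pE v k = {z. fst z \<in> pF v k \<and> snd z \<in> pF v k}"

definition tdet :: "'a::field \<Rightarrow> 'a \<times> 'a \<Rightarrow> 'a \<times> 'a" where
  "tdet eps a = emult eps a (einv eps (econj a))"

section \<open>The filtrations T_n (via a |-> t(a)) and S_n (via a |-> diag(a,a^-1))\<close>

definition Tn :: "'a::field \<Rightarrow> ('a \<Rightarrow> int) \<Rightarrow> nat \<Rightarrow> ('a \<times> 'a) set" where
  "Tn eps v n = (if n = 0
     then {z. z \<in> pE v 0 \<and> z \<noteq> (0, 0) \<and> einv eps z \<in> pE v 0}
     else {z. (fst z - 1, snd z) \<in> pE v (int n)})"

definition Sn :: "('a::field \<Rightarrow> int) \<Rightarrow> nat \<Rightarrow> 'a set" where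
  "Sn v n = (if n = 0
     then {a. a \<in> pF v 0 \<and> a \<noteq> 0 \<and> inverse a \<in> pF v 0}
     else {a. a - 1 \<in> pF v (int n)})"

(* a (smooth) character of T, written as a function of a where t(a) \<in> T *)
definition char_T :: "'a::field \<Rightarrow> ('a \<Rightarrow> int) \<Rightarrow> ('a \<times> 'a \<Rightarrow> complex) \<Rightarrow> bool" where
  "char_T eps v chi \<longleftrightarrow>
     (\<forall>a b. a \<noteq> (0, 0) \<longrightarrow> b \<noteq> (0, 0) \<longrightarrow> chi (emult eps a b) = chi a * chi b) \<and>
     (\<forall>a. a \<noteq> (0, 0) \<longrightarrow> chi a \<noteq> 0) \<and>
     (\<exists>n\<ge>1. \<forall>a\<in>Tn eps v n. chi a = 1)"

definition char_E1 :: "'a::field \<Rightarrow> ('a \<Rightarrow> int) \<Rightarrow> ('a \<times> 'a \<Rightarrow> complex) \<Rightarrow> bool" where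
  "char_E1 eps v phi \<longleftrightarrow>
     (\<forall>a\<in>E1 eps. \<forall>b\<in>E1 eps. phi (emult eps a b) = phi a * phi b) \<and>
     (\<forall>a\<in>E1 eps. phi a \<noteq> 0) \<and>
     (\<exists>n\<ge>1. \<forall>a\<in>E1 eps \<inter> Tn eps v n. phi a = 1)"

definition has_depth :: "(nat \<Rightarrow> 'b set) \<Rightarrow> ('b \<Rightarrow> complex) \<Rightarrow> nat \<Rightarrow> bool" where
  "has_depth G f r \<longleftrightarrow>
     (\<forall>x\<in>G (Suc r). f x = 1) \<and>
     ((\<exists>x\<in>G r. f x \<noteq> 1) \<or> (r = 0 \<and> (\<forall>x\<in>G 0. f x = 1)))"

definition depth_T :: "'a::field \<Rightarrow> ('a \<Rightarrow> int) \<Rightarrow> ('a \<times> 'a \<Rightarrow> complex) \<Rightarrow> nat \<Rightarrow> bool" where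
  "depth_T eps v chi r \<longleftrightarrow> has_depth (Tn eps v) chi r"

(* true depth: depth of the restriction to S, diag(a,a^-1) = t(a) for a in F^x *)
definition true_depth :: "('a::field \<Rightarrow> int) \<Rightarrow> ('a \<times> 'a \<Rightarrow> complex) \<Rightarrow> nat \<Rightarrow> bool" where
  "true_depth v chi r \<longleftrightarrow> has_depth (Sn v) (\<lambda>a. chi (a, 0)) r"

definition minimal_depth :: "'a::field \<Rightarrow> ('a \<Rightarrow> int) \<Rightarrow> ('a \<times> 'a \<Rightarrow> complex) \<Rightarrow> nat \<Rightarrow> bool" where
  "minimal_depth eps v chi r \<longleftrightarrow> depth_T eps v chi r \<and> true_depth v chi r"

end

(*
  The restriction of chi to S, i.e. to the image of F^x, is trivial on S_(r+1), which is the
  intersection of S with T_(r+1). Since the multiplicative group of complex numbers is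
  divisible, characters of subgroups of abelian groups extend (Zorn), so chi restricted to
  S extends to a character chi' of E^x that is trivial on T_(r+1). Agreeing with chi on S,
  chi' has true depth r, and a point of S_r where chi is nontrivial shows that chi' has
  depth r. The quotient chi / chi' is trivial on F^x, which by Hilbert 90 is the kernel of
  det : t(a) |-> a / conj a, a surjection onto E^1; hence chi / chi' = phi o det. Finally phi
  is smooth: for z in E^1 and T_n, the element (1 + z) / 2 of T_n has determinant z.
*)
theory Submission
  imports Defs "HOL-Algebra.Multiplicative_Group"
begin

section \<open>Extending characters of abelian groups\<close>

definition char_on :: "('a, 'b) monoid_scheme \<Rightarrow> 'a set \<Rightarrow> ('a \<Rightarrow> complex) \<Rightarrow> bool" where
  "char_on G K \<phi> \<longleftrightarrow> (\<forall>x\<in>K. \<forall>y\<in>K. \<phi> (x \<otimes>\<^bsub>G\<^esub> y) = \<phi> x * \<phi> y) \<and> (\<forall>x\<in>K. \<phi> x \<noteq> 0)"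

lemma char_on_subset: "K' \<subseteq> K \<Longrightarrow> char_on G K \<phi> \<Longrightarrow> char_on G K' \<phi>"
  unfolding char_on_def by blast

context group
begin

lemma char_on_one:
  assumes "subgroup K G" "char_on G K \<phi>"
  shows "\<phi> \<one> = 1"
proof -
  have "\<one> \<in> K" using assms(1) by (rule subgroup.one_closed)
  then have "\<phi> (\<one> \<otimes> \<one>) = \<phi> \<one> * \<phi> \<one>" "\<phi> \<one> \<noteq> 0"
    using assms(2) unfolding char_on_def by blast+
  then show ?thesis by simp
qed

lemma char_on_inv:
  assumes K: "subgroup K G" and \<phi>: "char_on G K \<phi>" and x: "x \<in> K"
  shows "\<phi> (inv x) = inverse (\<phi> x)"
proof -
  have "inv x \<in> K" using K x by (rule subgroup.m_inv_closed)
  then have "\<phi> (x \<otimes> inv x) = \<phi> x * \<phi> (inv x)" using \<phi> x unfolding char_on_def by blast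
  then have "\<phi> x * \<phi> (inv x) = 1"
    using char_on_one[OF K \<phi>] subgroup.mem_carrier[OF K x] by simp
  then show ?thesis by (rule inverse_unique[symmetric])
qed

lemma char_on_nat_pow:
  assumes K: "subgroup K G" and \<phi>: "char_on G K \<phi>" and x: "x \<in> K"
  shows "\<phi> (x [^] (n::nat)) = \<phi> x ^ n"
proof (induction n)
  case 0
  show ?case using char_on_one[OF K \<phi>] by simp
next
  case (Suc n)
  have "x [^] n \<in> K" using subgroup_int_pow_closed[OF K x, of "int n"] by (simp add: int_pow_int)
  then show ?case using Suc \<phi> x unfolding char_on_def by (simp add: mult.commute)
qed

lemma char_on_int_pow:
  assumes K: "subgroup K G" and \<phi>: "char_on G K \<phi>" and x: "x \<in> K"
  shows "\<phi> (x [^] (i::int)) = \<phi> x powi i"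
proof (cases i rule: int_cases2)
  case (nonneg n)
  then show ?thesis using char_on_nat_pow[OF assms] by (simp add: int_pow_int)
next
  case (nonpos n)
  have "x [^] n \<in> K" using subgroup_int_pow_closed[OF K x, of "int n"] by (simp add: int_pow_int)
  then show ?thesis
    using nonpos char_on_inv[OF K \<phi>] char_on_nat_pow[OF assms] subgroup.mem_carrier[OF K x]
    by (simp add: int_pow_neg_int power_int_minus)
qed

end

lemma (in normal) int_pow_mem_iff_dvd:
  assumes a: "a \<in> carrier G"
  shows "\<exists>m::nat. \<forall>j::int. a [^] j \<in> H \<longleftrightarrow> int m dvd j"
proof -
  interpret Q: group "G Mod H" by (rule factorgroup_is_group)
  have c: "H #> a \<in> carrier (G Mod H)" using a by (simp add: carrier_FactGroup)
  have "a [^] j \<in> H \<longleftrightarrow> (H #> a) [^]\<^bsub>G Mod H\<^esub> j = \<one>\<^bsub>G Mod H\<^esub>" for j :: int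
  proof -
    have aj: "a [^] j \<in> carrier G" using a by simp
    have "a [^] j \<in> H \<longleftrightarrow> H #> a [^] j = H"
      using coset_join1[OF _ aj subgroup_axioms] subgroup.rcos_const[OF subgroup_axioms is_group]
      by blast
    also have "H #> a [^] j = (H #> a) [^]\<^bsub>G Mod H\<^esub> j" using FactGroup_int_pow[OF a] by simp
    finally show ?thesis by simp
  qed
  then show ?thesis using Q.int_pow_eq_id[OF c] by blast
qed

(* The one use of the divisibility of the multiplicative group of complex numbers: g gets an
   m-th root of the value at g^m, where m is the order of g modulo K. *)
lemma (in comm_group) char_on_powers:
  assumes K: "subgroup K G" and \<phi>: "char_on G K \<phi>" and g: "g \<in> carrier G"
  shows "\<exists>c. c \<noteq> 0 \<and> (\<forall>j::int. g [^] j \<in> K \<longrightarrow> \<phi> (g [^] j) = c powi j)"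
proof -
  interpret K: normal K G using K by (rule subgroup_imp_normal)
  obtain m where m: "\<And>j::int. g [^] j \<in> K \<longleftrightarrow> int m dvd j"
    using K.int_pow_mem_iff_dvd[OF g] by blast
  have gm: "g [^] int m \<in> K" using m by simp
  have \<phi>gm: "\<phi> (g [^] int m) \<noteq> 0" using \<phi> gm unfolding char_on_def by blast
  obtain c where c: "c \<noteq> 0" "c ^ m = \<phi> (g [^] int m)"
  proof (cases "m = 0")
    case True
    then show ?thesis using that[of 1] char_on_one[OF K \<phi>] by simp
  next
    case False
    then have "card {c. c ^ m = \<phi> (g [^] int m)} = m" using \<phi>gm by (simp add: card_nth_roots)
    then have "{c. c ^ m = \<phi> (g [^] int m)} \<noteq> {}" using False by (metis card.empty)
    then obtain c where c: "c ^ m = \<phi> (g [^] int m)" by blast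
    moreover have "c \<noteq> 0"
    proof
      assume "c = 0"
      then show False using c \<phi>gm False by (simp add: zero_power)
    qed
    ultimately show ?thesis using that by blast
  qed
  have "\<phi> (g [^] j) = c powi j" if jK: "g [^] j \<in> K" for j :: int
  proof -
    obtain q where j: "j = int m * q" using m jK unfolding dvd_def by blast
    have "\<phi> (g [^] j) = \<phi> ((g [^] int m) [^] q)" using j int_pow_pow[OF g] by simp
    also have "\<dots> = (c powi int m) powi q" using char_on_int_pow[OF K \<phi> gm] c(2) by simp
    finally show ?thesis using j by (simp add: power_int_mult)
  qed
  then show ?thesis using c(1) by blast
qed

lemma (in group) char_on_cyclic:
  assumes g: "g \<in> carrier G" and c: "c \<noteq> 0" and ord: "\<And>k::int. g [^] k = \<one> \<Longrightarrow> c powi k = 1"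
  shows "\<exists>h. char_on G (generate G {g}) h \<and> (\<forall>k::int. h (g [^] k) = c powi k)"
proof -
  define h where "h y = c powi (SOME k::int. y = g [^] k)" for y
  have h: "h (g [^] k) = c powi k" for k :: int
  proof -
    define l where "l = (SOME l::int. g [^] k = g [^] l)"
    have "g [^] k = g [^] l" unfolding l_def by (rule someI[of _ k]) simp
    then have "g [^] (k - l) = \<one>" using g by (simp add: int_pow_diff)
    then have "c powi k / c powi l = 1" using ord[of "k - l"] c by (simp add: power_int_diff)
    then show ?thesis using c unfolding h_def l_def by simp
  qed
  have "char_on G (generate G {g}) h"
    unfolding char_on_def generate_pow[OF g]
  proof safe
    fix k l :: int
    have "g [^] k \<otimes> g [^] l = g [^] (k + l)" using int_pow_mult[OF g] by simp
    then show "h (g [^] k \<otimes> g [^] l) = h (g [^] k) * h (g [^] l)" using h c by (simp add: power_int_add)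
  next
    fix k :: int assume "h (g [^] k) = 0"
    then show False using h c by simp
  qed
  then show ?thesis using h by blast
qed

lemma mem_set_mult_iff: "z \<in> H <#>\<^bsub>G\<^esub> N \<longleftrightarrow> (\<exists>x\<in>H. \<exists>y\<in>N. z = x \<otimes>\<^bsub>G\<^esub> y)"
  by (auto simp: set_mult_def)

lemma (in comm_group) char_on_set_mult_well_defined:
  assumes H: "subgroup H G" and N: "subgroup N G"
    and f: "char_on G H f" and h: "char_on G N h" and agree: "\<And>x. x \<in> H \<inter> N \<Longrightarrow> f x = h x"
    and x: "x \<in> H" "x' \<in> H" and y: "y \<in> N" "y' \<in> N" and eq: "x \<otimes> y = x' \<otimes> y'"
  shows "f x * h y = f x' * h y'"
proof -
  have [simp]: "x \<in> carrier G" "x' \<in> carrier G" "y \<in> carrier G" "y' \<in> carrier G"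
    using x y by (simp_all add: subgroup.mem_carrier[OF H] subgroup.mem_carrier[OF N])
  have "x' \<otimes> (y' \<otimes> inv y) = (x' \<otimes> y') \<otimes> inv y" by (simp add: m_assoc)
  also have "\<dots> = (x \<otimes> y) \<otimes> inv y" by (simp add: eq)
  also have "\<dots> = x" by (simp add: m_assoc)
  finally have z: "inv x' \<otimes> x = y' \<otimes> inv y" by (simp add: inv_solve_left')
  have inv: "inv x' \<in> H" "inv y \<in> N" using x y H N by (simp_all add: subgroup.m_inv_closed)
  have "inv x' \<otimes> x \<in> H" "y' \<otimes> inv y \<in> N" using x y inv H N by (simp_all add: subgroup.m_closed)
  then have "inv x' \<otimes> x \<in> H \<inter> N" "inv x' \<otimes> x = y' \<otimes> inv y" using z by simp_all
  then have "f (inv x') * f x = h y' * h (inv y)"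
    using agree x y inv f h unfolding char_on_def by metis
  moreover have "f x' \<noteq> 0" "h y \<noteq> 0" using x y f h unfolding char_on_def by blast+
  ultimately show ?thesis
    using char_on_inv[OF H f x(2)] char_on_inv[OF N h y(1)] by (simp add: field_simps)
qed

lemma (in comm_group) char_on_set_mult:
  assumes H: "subgroup H G" and N: "subgroup N G"
    and f: "char_on G H f" and h: "char_on G N h" and agree: "\<And>x. x \<in> H \<inter> N \<Longrightarrow> f x = h x"
  shows "\<exists>F. char_on G (H <#> N) F \<and> (\<forall>x\<in>H. \<forall>y\<in>N. F (x \<otimes> y) = f x * h y)"
proof -
  note wd = char_on_set_mult_well_defined[OF assms]
  define F where "F z = (SOME p. \<exists>x\<in>H. \<exists>y\<in>N. z = x \<otimes> y \<and> p = f x * h y)" for z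
  have F: "F (x \<otimes> y) = f x * h y" if "x \<in> H" "y \<in> N" for x y
  proof -
    have "\<exists>p. \<exists>x'\<in>H. \<exists>y'\<in>N. x \<otimes> y = x' \<otimes> y' \<and> p = f x' * h y'" using that by blast
    from someI_ex[OF this] show ?thesis using wd that unfolding F_def by metis
  qed
  have "char_on G (H <#> N) F"
    unfolding char_on_def
  proof (intro conjI ballI)
    fix z w assume "z \<in> H <#> N" "w \<in> H <#> N"
    then obtain x y x' y' where x: "x \<in> H" "x' \<in> H" and y: "y \<in> N" "y' \<in> N"
      and zw: "z = x \<otimes> y" "w = x' \<otimes> y'" by (auto simp: mem_set_mult_iff)
    have [simp]: "x \<in> carrier G" "x' \<in> carrier G" "y \<in> carrier G" "y' \<in> carrier G"
      using x y by (simp_all add: subgroup.mem_carrier[OF H] subgroup.mem_carrier[OF N])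
    have "z \<otimes> w = (x \<otimes> x') \<otimes> (y \<otimes> y')" unfolding zw by (simp add: m_ac)
    moreover have "x \<otimes> x' \<in> H" "y \<otimes> y' \<in> N" using x y by (simp_all add: subgroup.m_closed H N)
    ultimately show "F (z \<otimes> w) = F z * F w"
      unfolding zw using F x y f h unfolding char_on_def by (simp add: mult_ac)
  next
    fix z assume "z \<in> H <#> N"
    then obtain x y where "x \<in> H" "y \<in> N" "z = x \<otimes> y" by (auto simp: mem_set_mult_iff)
    then show "F z \<noteq> 0" using F f h unfolding char_on_def by simp
  qed
  then show ?thesis using F by blast
qed

lemma (in comm_group) char_on_adjoin:
  assumes K: "subgroup K G" and \<phi>: "char_on G K \<phi>" and g: "g \<in> carrier G"
  shows "\<exists>K' \<phi>'. subgroup K' G \<and> char_on G K' \<phi>' \<and> K \<subseteq> K' \<and> g \<in> K' \<and> (\<forall>x\<in>K. \<phi>' x = \<phi> x)"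
proof -
  obtain c where c: "c \<noteq> 0" "\<And>j. g [^] j \<in> K \<Longrightarrow> \<phi> (g [^] j) = c powi j"
    using char_on_powers[OF assms] by blast
  have "c powi k = 1" if "g [^] k = \<one>" for k :: int
    using c(2)[of k] that char_on_one[OF K \<phi>] subgroup.one_closed[OF K] by simp
  then obtain h where h: "char_on G (generate G {g}) h" "\<And>k::int. h (g [^] k) = c powi k"
    using char_on_cyclic[OF g c(1)] by blast
  define N where "N = generate G {g}"
  have N: "subgroup N G" unfolding N_def using g by (simp add: generate_is_subgroup)
  have "\<phi> x = h x" if "x \<in> K \<inter> N" for x
    using that c(2) h(2) unfolding N_def generate_pow[OF g] by auto
  then obtain F where F: "char_on G (K <#> N) F" "\<And>x y. x \<in> K \<Longrightarrow> y \<in> N \<Longrightarrow> F (x \<otimes> y) = \<phi> x * h y"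
    using char_on_set_mult[OF K N \<phi>] h(1) unfolding N_def by blast
  have one: "\<one> \<in> N" by (simp add: N_def generate.one)
  have gN: "g \<in> N" by (simp add: N_def generate.incl)
  have h1: "h \<one> = 1" using h(2)[of 0] by simp
  have "x \<in> K <#> N \<and> F x = \<phi> x" if "x \<in> K" for x
    using F(2)[OF that one] one that subgroup.mem_carrier[OF K] h1 unfolding mem_set_mult_iff by force
  moreover have "g \<in> K <#> N"
    using subgroup.one_closed[OF K] gN g unfolding mem_set_mult_iff by force
  ultimately show ?thesis using mult_subgroups[OF K N] F(1) by blast
qed

(* Partial characters are handled through their graphs, so that Zorn's lemma for the
   subset order applies. *)
definition char_graphs :: "('a, 'b) monoid_scheme \<Rightarrow> ('a \<times> complex) set set" where
  "char_graphs G = {(\<lambda>x. (x, \<phi> x)) ` K | K \<phi>. subgroup K G \<and> char_on G K \<phi>}"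

lemma (in group) char_graphs_chain_common:
  assumes ch: "subset.chain (char_graphs G) C" and p: "p \<in> \<Union>C" and q: "q \<in> \<Union>C"
  shows "\<exists>K \<phi>. subgroup K G \<and> char_on G K \<phi> \<and> (\<lambda>x. (x, \<phi> x)) ` K \<subseteq> \<Union>C \<and>
           p \<in> (\<lambda>x. (x, \<phi> x)) ` K \<and> q \<in> (\<lambda>x. (x, \<phi> x)) ` K"
proof -
  obtain \<Gamma>1 \<Gamma>2 where \<Gamma>: "\<Gamma>1 \<in> C" "\<Gamma>2 \<in> C" "p \<in> \<Gamma>1" "q \<in> \<Gamma>2" using p q by blast
  moreover have "\<Gamma>1 \<subseteq> \<Gamma>2 \<or> \<Gamma>2 \<subseteq> \<Gamma>1" using ch \<Gamma>(1,2) unfolding subset.chain_def by auto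
  ultimately obtain \<Gamma> where "\<Gamma> \<in> C" "p \<in> \<Gamma>" "q \<in> \<Gamma>" by blast
  moreover have "\<Gamma> \<in> char_graphs G" using ch \<open>\<Gamma> \<in> C\<close> unfolding subset.chain_def by blast
  then obtain K \<phi> where "\<Gamma> = (\<lambda>x. (x, \<phi> x)) ` K" "subgroup K G" "char_on G K \<phi>"
    unfolding char_graphs_def by blast
  moreover have "\<Gamma> \<subseteq> \<Union>C" using \<open>\<Gamma> \<in> C\<close> by blast
  ultimately show ?thesis by (intro exI[of _ K] exI[of _ \<phi>]) simp
qed

lemma (in group) subgroup_char_on_directed:
  assumes "K \<noteq> {}"
    and local: "\<And>x y. x \<in> K \<Longrightarrow> y \<in> K \<Longrightarrow> \<exists>K' \<phi>'. subgroup K' G \<and> char_on G K' \<phi>' \<and>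
                  x \<in> K' \<and> y \<in> K' \<and> K' \<subseteq> K \<and> (\<forall>z\<in>K'. \<phi> z = \<phi>' z)"
  shows "subgroup K G" "char_on G K \<phi>"
proof -
  show "subgroup K G"
  proof (rule subgroupI)
    show "K \<subseteq> carrier G"
    proof
      fix x assume "x \<in> K"
      then obtain K' where "subgroup K' G" "x \<in> K'" using local[of x x] by blast
      then show "x \<in> carrier G" by (rule subgroup.mem_carrier)
    qed
  next
    fix x y assume "x \<in> K" "y \<in> K"
    then obtain K' where K': "subgroup K' G" "x \<in> K'" "y \<in> K'" "K' \<subseteq> K" using local by blast
    show "inv x \<in> K" using subgroup.m_inv_closed[OF K'(1,2)] K'(4) by blast
    show "x \<otimes> y \<in> K" using subgroup.m_closed[OF K'(1,2,3)] K'(4) by blast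
  qed fact
  show "char_on G K \<phi>"
    unfolding char_on_def
  proof (intro conjI ballI)
    fix x y assume "x \<in> K" "y \<in> K"
    then obtain K' \<phi>' where K': "subgroup K' G" "char_on G K' \<phi>'" "x \<in> K'" "y \<in> K'"
      "\<forall>z\<in>K'. \<phi> z = \<phi>' z" using local by blast
    have "x \<otimes> y \<in> K'" using K'(1,3,4) by (rule subgroup.m_closed)
    then show "\<phi> (x \<otimes> y) = \<phi> x * \<phi> y" using K' unfolding char_on_def by simp
  next
    fix x assume "x \<in> K"
    then obtain K' \<phi>' where "char_on G K' \<phi>'" "x \<in> K'" "\<forall>z\<in>K'. \<phi> z = \<phi>' z"
      using local[of x x] by blast
    then show "\<phi> x \<noteq> 0" unfolding char_on_def by simp
  qed
qed

lemma (in group) Union_chain_in_char_graphs: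
  assumes C: "C \<noteq> {}" and ch: "subset.chain (char_graphs G) C"
  shows "\<Union>C \<in> char_graphs G"
proof -
  define K where "K = fst ` \<Union>C"
  define \<phi> where "\<phi> x = (THE a. (x, a) \<in> \<Union>C)" for x
  have \<phi>: "\<phi> x = a" if xa: "(x, a) \<in> \<Union>C" for x a
  proof -
    have "b = a" if "(x, b) \<in> \<Union>C" for b
      using char_graphs_chain_common[OF ch xa that] by auto
    then show ?thesis unfolding \<phi>_def using xa by blast
  qed
  have graph: "\<Union>C = (\<lambda>x. (x, \<phi> x)) ` K"
  proof (intro equalityI subsetI)
    fix p assume p: "p \<in> \<Union>C"
    then have "p = (\<lambda>x. (x, \<phi> x)) (fst p)" using \<phi>[of "fst p" "snd p"] by simp
    moreover have "fst p \<in> K" unfolding K_def using p by (rule imageI)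
    ultimately show "p \<in> (\<lambda>x. (x, \<phi> x)) ` K" by (rule image_eqI)
  next
    fix p assume "p \<in> (\<lambda>x. (x, \<phi> x)) ` K"
    then obtain q where q: "q \<in> \<Union>C" "p = (fst q, \<phi> (fst q))" unfolding K_def by blast
    then show "p \<in> \<Union>C" using \<phi>[of "fst q" "snd q"] by simp
  qed
  have nonempty: "K \<noteq> {}"
  proof -
    obtain \<Gamma> where "\<Gamma> \<in> C" using C by blast
    then obtain K' \<phi>' where "\<Gamma> = (\<lambda>x. (x, \<phi>' x)) ` K'" "subgroup K' G"
      using ch unfolding subset.chain_def char_graphs_def by blast
    then have "(\<one>, \<phi>' \<one>) \<in> \<Union>C" using \<open>\<Gamma> \<in> C\<close> subgroup.one_closed by blast
    then show ?thesis unfolding K_def by (metis empty_iff fst_conv image_eqI)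
  qed
  have local: "\<exists>K' \<phi>'. subgroup K' G \<and> char_on G K' \<phi>' \<and> x \<in> K' \<and> y \<in> K' \<and> K' \<subseteq> K \<and>
                 (\<forall>z\<in>K'. \<phi> z = \<phi>' z)" if xy: "x \<in> K" "y \<in> K" for x y
  proof -
    obtain p q where "p \<in> \<Union>C" "q \<in> \<Union>C" "x = fst p" "y = fst q" using xy unfolding K_def by blast
    from char_graphs_chain_common[OF ch this(1,2)] obtain K' \<phi>' where K': "subgroup K' G" "char_on G K' \<phi>'"
      "(\<lambda>x. (x, \<phi>' x)) ` K' \<subseteq> \<Union>C" "p \<in> (\<lambda>x. (x, \<phi>' x)) ` K'" "q \<in> (\<lambda>x. (x, \<phi>' x)) ` K'"
      by blast
    have "z \<in> K \<and> \<phi> z = \<phi>' z" if "z \<in> K'" for z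
    proof -
      have zC: "(z, \<phi>' z) \<in> \<Union>C" using K'(3) that by blast
      then have "z \<in> K" unfolding K_def by (metis fst_conv image_eqI)
      with \<phi>[OF zC] show ?thesis by simp
    qed
    moreover have "x \<in> K'" "y \<in> K'" using K'(4,5) \<open>x = fst p\<close> \<open>y = fst q\<close> by auto
    ultimately show ?thesis using K'(1,2) by blast
  qed
  from subgroup_char_on_directed[OF nonempty local] show ?thesis
    unfolding char_graphs_def mem_Collect_eq graph by (intro exI[of _ K] exI[of _ \<phi>]) simp
qed

lemma (in comm_group) char_on_extend:
  assumes H: "subgroup H G" and f: "char_on G H f"
  shows "\<exists>F. char_on G (carrier G) F \<and> (\<forall>x\<in>H. F x = f x)"
proof -
  define A where "A = {\<Gamma> \<in> char_graphs G. (\<lambda>x. (x, f x)) ` H \<subseteq> \<Gamma>}"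
  have "A \<noteq> {}" using H f unfolding A_def char_graphs_def by blast
  moreover have "\<Union>C \<in> A" if C: "C \<noteq> {}" "subset.chain A C" for C
  proof -
    have "subset.chain (char_graphs G) C" using C(2) unfolding A_def subset.chain_def by blast
    then have "\<Union>C \<in> char_graphs G" by (rule Union_chain_in_char_graphs[OF C(1)])
    moreover obtain \<Gamma> where "\<Gamma> \<in> C" using C(1) by blast
    then have "(\<lambda>x. (x, f x)) ` H \<subseteq> \<Union>C" using C(2) unfolding A_def subset.chain_def by blast
    ultimately show ?thesis unfolding A_def by blast
  qed
  ultimately obtain M where M: "M \<in> A" and max: "\<And>X. X \<in> A \<Longrightarrow> M \<subseteq> X \<Longrightarrow> X = M"
    using subset_Zorn_nonempty[of A] by blast
  then obtain K \<phi> where M_eq: "M = (\<lambda>x. (x, \<phi> x)) ` K" and K: "subgroup K G" and \<phi>: "char_on G K \<phi>"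
    unfolding A_def char_graphs_def by blast
  have "K = carrier G"
  proof (rule ccontr)
    assume "K \<noteq> carrier G"
    then obtain g where g: "g \<in> carrier G" "g \<notin> K" using subgroup.subset[OF K] by blast
    obtain K' \<phi>' where K': "subgroup K' G" "char_on G K' \<phi>'" "K \<subseteq> K'" "g \<in> K'" "\<forall>x\<in>K. \<phi>' x = \<phi> x"
      using char_on_adjoin[OF K \<phi> g(1)] by blast
    have "M \<subseteq> (\<lambda>x. (x, \<phi>' x)) ` K'" unfolding M_eq using K'(3,5) by auto
    moreover from this have "(\<lambda>x. (x, \<phi>' x)) ` K' \<in> A"
      using M K'(1,2) unfolding A_def char_graphs_def by blast
    ultimately have "(\<lambda>x. (x, \<phi>' x)) ` K' = M" using max by blast
    then have "(g, \<phi>' g) \<in> M" using K'(4) by blast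
    then show False using g(2) unfolding M_eq by auto
  qed
  moreover have "\<phi> x = f x" if "x \<in> H" for x
  proof -
    have "(x, f x) \<in> M" using M that unfolding A_def by blast
    then show ?thesis unfolding M_eq by auto
  qed
  ultimately show ?thesis using \<phi> by blast
qed

lemma (in comm_group) char_on_extend_trivial_on:
  assumes H: "subgroup H G" and N: "subgroup N G"
    and f: "char_on G H f" and triv: "\<And>x. x \<in> H \<inter> N \<Longrightarrow> f x = 1"
  shows "\<exists>F. char_on G (carrier G) F \<and> (\<forall>x\<in>H. F x = f x) \<and> (\<forall>y\<in>N. F y = 1)"
proof -
  have "char_on G N (\<lambda>_. 1)" by (simp add: char_on_def)
  with triv obtain F0 where F0: "char_on G (H <#> N) F0" "\<forall>x\<in>H. \<forall>y\<in>N. F0 (x \<otimes> y) = f x * 1"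
    using char_on_set_mult[OF H N f] by blast
  obtain F where F: "char_on G (carrier G) F" "\<forall>z\<in>H <#> N. F z = F0 z"
    using char_on_extend[OF mult_subgroups[OF H N] F0(1)] by blast
  have one: "\<one> \<in> H" "\<one> \<in> N" using H N by (simp_all add: subgroup.one_closed)
  have "F x = f x" if x: "x \<in> H" for x
  proof -
    have "x \<otimes> \<one> \<in> H <#> N" unfolding mem_set_mult_iff using x one by blast
    then have "F (x \<otimes> \<one>) = f x" using F(2) F0(2) x one by simp
    then show ?thesis using subgroup.mem_carrier[OF H x] by simp
  qed
  moreover have "F y = 1" if y: "y \<in> N" for y
  proof -
    have "\<one> \<otimes> y \<in> H <#> N" unfolding mem_set_mult_iff using y one by blast
    then have "F (\<one> \<otimes> y) = f \<one>" using F(2) F0(2) y one by simp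
    then show ?thesis using subgroup.mem_carrier[OF N y] char_on_one[OF H f] by simp
  qed
  ultimately show ?thesis using F(1) by blast
qed

section \<open>The valuation\<close>

context
  fixes v :: "'a::field \<Rightarrow> int"
  assumes v_nonarch: "nonarch_local_field v"
begin

lemma v_mult: "x \<noteq> 0 \<Longrightarrow> y \<noteq> 0 \<Longrightarrow> v (x * y) = v x + v y"
  using v_nonarch unfolding nonarch_local_field_def by blast

lemma v_add: "x \<noteq> 0 \<Longrightarrow> y \<noteq> 0 \<Longrightarrow> x + y \<noteq> 0 \<Longrightarrow> min (v x) (v y) \<le> v (x + y)"
  using v_nonarch unfolding nonarch_local_field_def by blast

lemma v_one: "v 1 = 0"
  using v_mult[of 1 1] by simp

lemma v_uminus:
  assumes "x \<noteq> 0"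
  shows "v (- x) = v x"
proof -
  have "v (- 1) = 0" using v_mult[of "- 1" "- 1"] v_one by simp
  then show ?thesis using v_mult[of "- 1" x] assms by simp
qed

lemma v_divide: "x \<noteq> 0 \<Longrightarrow> y \<noteq> 0 \<Longrightarrow> v (x / y) = v x - v y"
  using v_mult[of "x / y" y] by simp

lemma pF_zero: "0 \<in> pF v k"
  unfolding pF_def by simp

lemma pF_uminus: "x \<in> pF v k \<Longrightarrow> - x \<in> pF v k"
  unfolding pF_def using v_uminus by force

lemma pF_add:
  assumes "x \<in> pF v k" "y \<in> pF v k"
  shows "x + y \<in> pF v k"
proof (cases "x = 0 \<or> y = 0 \<or> x + y = 0")
  case True
  then show ?thesis using assms pF_zero by auto
next
  case False
  then have "min (v x) (v y) \<le> v (x + y)" using v_add by blast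
  then show ?thesis using assms False unfolding pF_def by auto
qed

lemma pF_diff: "x \<in> pF v k \<Longrightarrow> y \<in> pF v k \<Longrightarrow> x - y \<in> pF v k"
  using pF_add[of x k "- y"] pF_uminus[of y k] by simp

lemma pF_mult: "x \<in> pF v j \<Longrightarrow> y \<in> pF v k \<Longrightarrow> x * y \<in> pF v (j + k)"
  unfolding pF_def using v_mult by force

lemma pF_mult_integral: "x \<in> pF v k \<Longrightarrow> y \<in> pF v 0 \<Longrightarrow> x * y \<in> pF v k"
  using pF_mult[of x k y 0] by simp

lemma pF_mono: "k \<le> j \<Longrightarrow> x \<in> pF v j \<Longrightarrow> x \<in> pF v k"
  unfolding pF_def by auto

lemma pF_divide_unit: "u \<noteq> 0 \<Longrightarrow> v u = 0 \<Longrightarrow> x \<in> pF v k \<Longrightarrow> x / u \<in> pF v k"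
  unfolding pF_def using v_divide by force

lemma one_plus_pF:
  assumes "k \<ge> 1" "x \<in> pF v k"
  shows "1 + x \<noteq> 0" "v (1 + x) = 0"
proof -
  show nz: "1 + x \<noteq> 0"
    using assms v_one v_uminus[of 1] unfolding pF_def by (auto simp: add_eq_0_iff)
  show "v (1 + x) = 0"
  proof (cases "x = 0")
    case True
    then show ?thesis using v_one by simp
  next
    case False
    have "1 \<le> v x" using assms False unfolding pF_def by auto
    moreover have "min (v 1) (v x) \<le> v (1 + x)" using v_add[of 1 x] False nz by simp
    moreover have "min (v (1 + x)) (v (- x)) \<le> v ((1 + x) + - x)"
      using v_add[of "1 + x" "- x"] False nz by simp
    ultimately show ?thesis using v_uminus[OF False] v_one by auto
  qed
qed

end

section \<open>The multiplicative group of E and its filtration\<close>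

lemma emult_comm: "emult eps z w = emult eps w z"
  unfolding emult_def by (simp add: algebra_simps)

lemma emult_assoc: "emult eps (emult eps z w) u = emult eps z (emult eps w u)"
  unfolding emult_def by (simp add: algebra_simps)

lemma emult_real: "emult eps (x, 0) (a, b) = (x * a, x * b)"
  unfolding emult_def by simp

lemma emult_one: "emult eps z (1, 0) = z"
  unfolding emult_def by simp

lemma enorm_emult: "enorm eps (emult eps z w) = enorm eps z * enorm eps w"
  unfolding enorm_def emult_def by (simp add: algebra_simps)

lemma econj_emult: "econj (emult eps z w) = emult eps (econj z) (econj w)"
  unfolding econj_def emult_def by simp

context
  fixes eps :: "'a::field"
  assumes nonsquare: "\<not> (\<exists>y. y * y = eps)"
begin

lemma enorm_nonzero:
  assumes "z \<noteq> (0, 0)"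
  shows "enorm eps z \<noteq> 0"
proof
  assume N: "enorm eps z = 0"
  obtain x y where z: "z = (x, y)" by (cases z)
  show False
  proof (cases "y = 0")
    case True
    then show False using N z assms unfolding enorm_def by simp
  next
    case False
    have "x * x = eps * y * y" using N z unfolding enorm_def by simp
    then have "(x / y) * (x / y) = eps" using False by (simp add: field_simps)
    then show False using nonsquare by blast
  qed
qed

lemma emult_nonzero: "z \<noteq> (0, 0) \<Longrightarrow> w \<noteq> (0, 0) \<Longrightarrow> emult eps z w \<noteq> (0, 0)"
  using enorm_nonzero[of z] enorm_nonzero[of w] enorm_emult[of eps z w] unfolding enorm_def by auto

lemma einv_emult:
  assumes "z \<noteq> (0, 0)"
  shows "emult eps (einv eps z) z = (1, 0)"
proof -
  obtain x y where z: "z = (x, y)" by (cases z)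
  define N where "N = x * x - eps * y * y"
  have N: "N \<noteq> 0" using enorm_nonzero[OF assms] z unfolding N_def enorm_def by simp
  have "x / N * x + eps * (- y / N) * y = N / N" unfolding N_def by (simp add: field_simps)
  moreover have "x / N * y + - y / N * x = 0" by (simp add: field_simps)
  ultimately show ?thesis using N unfolding z einv_def emult_def enorm_def N_def by simp
qed

lemma einv_nonzero:
  assumes "z \<noteq> (0, 0)"
  shows "einv eps z \<noteq> (0, 0)"
proof
  assume "einv eps z = (0, 0)"
  then have "emult eps (0, 0) z = (1, 0)" using einv_emult[OF assms] by simp
  then show False by (simp add: emult_def)
qed

end

definition E_units :: "'a::field \<Rightarrow> ('a \<times> 'a) monoid" where
  "E_units eps = \<lparr>carrier = {z. z \<noteq> (0, 0)}, mult = emult eps, one = (1, 0)\<rparr>"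

lemma E_units_simps [simp]:
  "carrier (E_units eps) = {z. z \<noteq> (0, 0)}" "mult (E_units eps) = emult eps" "one (E_units eps) = (1, 0)"
  unfolding E_units_def by simp_all

lemma E_units_comm_group:
  assumes "\<not> (\<exists>y. y * y = eps)"
  shows "comm_group (E_units eps)"
proof (rule comm_groupI)
  fix z w assume "z \<in> carrier (E_units eps)" "w \<in> carrier (E_units eps)"
  then show "z \<otimes>\<^bsub>E_units eps\<^esub> w \<in> carrier (E_units eps)" using emult_nonzero[OF assms] by simp
next
  fix z w u
  show "z \<otimes>\<^bsub>E_units eps\<^esub> w \<otimes>\<^bsub>E_units eps\<^esub> u = z \<otimes>\<^bsub>E_units eps\<^esub> (w \<otimes>\<^bsub>E_units eps\<^esub> u)"
    by (simp add: emult_assoc)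
  show "z \<otimes>\<^bsub>E_units eps\<^esub> w = w \<otimes>\<^bsub>E_units eps\<^esub> z" by (simp add: emult_comm)
  show "\<one>\<^bsub>E_units eps\<^esub> \<otimes>\<^bsub>E_units eps\<^esub> z = z" by (cases z) (simp add: emult_real)
next
  fix z assume z: "z \<in> carrier (E_units eps)"
  then have "einv eps z \<noteq> (0, 0)" using einv_nonzero[OF assms] by simp
  then show "\<exists>w\<in>carrier (E_units eps). w \<otimes>\<^bsub>E_units eps\<^esub> z = \<one>\<^bsub>E_units eps\<^esub>"
    using einv_emult[OF assms] z by (intro bexI[of _ "einv eps z"]) auto
qed simp

lemma E_units_inv:
  assumes "\<not> (\<exists>y. y * y = eps)" "z \<noteq> (0, 0)"
  shows "inv\<^bsub>E_units eps\<^esub> z = einv eps z"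
proof -
  interpret E: comm_group "E_units eps" using assms(1) by (rule E_units_comm_group)
  have "einv eps z \<noteq> (0, 0)" using einv_nonzero[OF assms] .
  then show ?thesis using E.inv_equality[of "einv eps z" z] einv_emult[OF assms] assms(2) by simp
qed

lemma char_T_iff_char_on:
  "char_T eps v \<chi> \<longleftrightarrow>
     char_on (E_units eps) (carrier (E_units eps)) \<chi> \<and> (\<exists>n\<ge>1. \<forall>a\<in>Tn eps v n. \<chi> a = 1)"
  unfolding char_T_def char_on_def by auto

lemma Tn_iff: "n \<ge> 1 \<Longrightarrow> z \<in> Tn eps v n \<longleftrightarrow> fst z - 1 \<in> pF v (int n) \<and> snd z \<in> pF v (int n)"
  unfolding Tn_def pE_def by simp

lemma Tn_Sn: "n \<ge> 1 \<Longrightarrow> (a, 0) \<in> Tn eps v n \<Longrightarrow> a \<in> Sn v n"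
  unfolding Tn_def Sn_def pE_def by simp

context
  fixes v :: "'a::field \<Rightarrow> int"
  assumes v_nonarch: "nonarch_local_field v"
begin

lemma Tn_mono: "1 \<le> m \<Longrightarrow> m \<le> n \<Longrightarrow> Tn eps v n \<subseteq> Tn eps v m"
  using pF_mono[OF v_nonarch, of "int m" "int n"] by (auto simp: Tn_iff)

lemma Sn_nonzero: "a \<in> Sn v n \<Longrightarrow> a \<noteq> 0"
  using one_plus_pF(1)[OF v_nonarch, of "int n" "- 1"] unfolding Sn_def by (auto split: if_splits)

lemma Sn_Tn:
  assumes "a \<in> Sn v n"
  shows "(a, 0) \<in> Tn eps v n"
proof (cases "n = 0")
  case True
  then have a: "a \<in> pF v 0" "a \<noteq> 0" "inverse a \<in> pF v 0" using assms unfolding Sn_def by auto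
  have "einv eps (a, 0) = (inverse a, 0)" unfolding einv_def enorm_def using a(2) by (simp add: field_simps)
  then show ?thesis using True a pF_zero[OF v_nonarch] unfolding Tn_def pE_def by simp
next
  case False
  then show ?thesis using assms pF_zero[OF v_nonarch] unfolding Tn_def Sn_def pE_def by simp
qed

context
  fixes eps :: 'a
  assumes eps_int: "eps \<in> pF v 0"
begin

lemma Tn_nonzero: "n \<ge> 1 \<Longrightarrow> z \<in> Tn eps v n \<Longrightarrow> z \<noteq> (0, 0)"
  using one_plus_pF(1)[OF v_nonarch, of "int n" "fst z - 1"] by (auto simp: Tn_iff)

lemma Tn_emult:
  assumes n: "n \<ge> 1" and z: "z \<in> Tn eps v n" and w: "w \<in> Tn eps v n"
  shows "emult eps z w \<in> Tn eps v n"
proof -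
  obtain a b c d where zw: "z = (1 + a, b)" "w = (1 + c, d)"
    by (metis add.commute diff_add_cancel prod.collapse)
  have p: "a \<in> pF v n" "b \<in> pF v n" "c \<in> pF v n" "d \<in> pF v n" using z w zw n by (simp_all add: Tn_iff)
  then have p0: "b \<in> pF v 0" "c \<in> pF v 0" "d \<in> pF v 0" using pF_mono[OF v_nonarch, of 0 "int n"] by auto
  have "eps * b * d \<in> pF v n"
    using pF_mult_integral[OF v_nonarch pF_mult_integral[OF v_nonarch p(2) eps_int] p0(3)]
    by (simp add: ac_simps)
  moreover have "a + c + a * c \<in> pF v n"
    using p p0 by (intro pF_add[OF v_nonarch] pF_mult_integral[OF v_nonarch])
  ultimately have "a + c + a * c + eps * b * d \<in> pF v n" by (rule pF_add[OF v_nonarch, rotated])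
  moreover have "d + a * d + b + b * c \<in> pF v n"
    using p p0 by (intro pF_add[OF v_nonarch] pF_mult_integral[OF v_nonarch]) auto
  moreover have "emult eps z w = (1 + (a + c + a * c + eps * b * d), d + a * d + b + b * c)"
    unfolding zw emult_def by (simp add: algebra_simps)
  ultimately show ?thesis using n by (simp add: Tn_iff)
qed

lemma Tn_einv:
  assumes n: "n \<ge> 1" and z: "z \<in> Tn eps v n"
  shows "einv eps z \<in> Tn eps v n"
proof -
  obtain a b where zab: "z = (1 + a, b)" by (metis add.commute diff_add_cancel prod.collapse)
  have p: "a \<in> pF v n" "b \<in> pF v n" using z zab n by (simp_all add: Tn_iff)
  then have p0: "a \<in> pF v 0" "b \<in> pF v 0" using pF_mono[OF v_nonarch, of 0 "int n"] by auto
  define m where "m = a + a + a * a - eps * b * b"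
  have "eps * b * b \<in> pF v n"
    using pF_mult_integral[OF v_nonarch pF_mult_integral[OF v_nonarch p(2) eps_int] p0(2)]
    by (simp add: ac_simps)
  moreover have "a + a + a * a \<in> pF v n"
    using p p0 by (intro pF_add[OF v_nonarch] pF_mult_integral[OF v_nonarch])
  ultimately have m: "m \<in> pF v n" unfolding m_def by (rule pF_diff[OF v_nonarch, rotated])
  have N: "enorm eps (1 + a, b) = 1 + m" unfolding m_def enorm_def by (simp add: algebra_simps)
  have N0: "1 + m \<noteq> 0" and vN: "v (1 + m) = 0" using one_plus_pF[OF v_nonarch _ m] n by auto
  have "(1 + a) / (1 + m) - 1 = (a - m) / (1 + m)" using N0 by (simp add: field_simps)
  moreover have "(a - m) / (1 + m) \<in> pF v n"
    using pF_divide_unit[OF v_nonarch N0 vN pF_diff[OF v_nonarch p(1) m]] .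
  moreover have "- (b / (1 + m)) \<in> pF v n"
    using pF_uminus[OF v_nonarch pF_divide_unit[OF v_nonarch N0 vN p(2)]] .
  ultimately show ?thesis using n unfolding zab einv_def N by (simp add: Tn_iff)
qed

lemma Tn_subgroup:
  assumes n: "n \<ge> 1" and nonsquare: "\<not> (\<exists>y. y * y = eps)"
  shows "subgroup (Tn eps v n) (E_units eps)"
proof (rule group.subgroupI)
  show "group (E_units eps)" using comm_group.axioms(2)[OF E_units_comm_group[OF nonsquare]] .
  show "Tn eps v n \<subseteq> carrier (E_units eps)" using Tn_nonzero[OF n] by auto
  have "(1, 0) \<in> Tn eps v n" using n pF_zero[OF v_nonarch] by (simp add: Tn_iff)
  then show "Tn eps v n \<noteq> {}" by blast
next
  fix z assume "z \<in> Tn eps v n"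
  then show "inv\<^bsub>E_units eps\<^esub> z \<in> Tn eps v n"
    using E_units_inv[OF nonsquare Tn_nonzero[OF n]] Tn_einv[OF n] by simp
next
  fix z w assume "z \<in> Tn eps v n" "w \<in> Tn eps v n"
  then show "z \<otimes>\<^bsub>E_units eps\<^esub> w \<in> Tn eps v n" using Tn_emult[OF n] by simp
qed

end

end

section \<open>The determinant\<close>

lemma econj_nonzero: "a \<noteq> (0, 0) \<Longrightarrow> econj a \<noteq> (0, 0)"
  unfolding econj_def by (cases a) auto

context
  fixes eps :: "'a::field"
  assumes nonsquare: "\<not> (\<exists>y. y * y = eps)"
begin

interpretation E: comm_group "E_units eps"
  using nonsquare by (rule E_units_comm_group)

lemma tdet_emult_econj: "a \<noteq> (0, 0) \<Longrightarrow> emult eps (tdet eps a) (econj a) = a"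
  unfolding tdet_def using einv_emult[OF nonsquare econj_nonzero]
  by (simp add: emult_assoc emult_one)

lemma tdet_nonzero: "a \<noteq> (0, 0) \<Longrightarrow> tdet eps a \<noteq> (0, 0)"
  using tdet_emult_econj[of a] by (auto simp: emult_def)

lemma tdet_emult:
  assumes a: "a \<noteq> (0, 0)" and b: "b \<noteq> (0, 0)"
  shows "tdet eps (emult eps a b) = emult eps (tdet eps a) (tdet eps b)"
proof -
  have c: "econj a \<in> carrier (E_units eps)" "econj b \<in> carrier (E_units eps)"
    using econj_nonzero[OF a] econj_nonzero[OF b] by simp_all
  have inv: "einv eps (econj (emult eps a b)) = emult eps (einv eps (econj a)) (einv eps (econj b))"
    using E.inv_mult[OF c] c E_units_inv[OF nonsquare] econj_nonzero[OF emult_nonzero[OF nonsquare a b]]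
    by (simp add: econj_emult)
  show ?thesis unfolding tdet_def inv by (metis emult_assoc emult_comm)
qed

lemma tdet_real: "x \<noteq> 0 \<Longrightarrow> tdet eps (x, 0) = (1, 0)"
  unfolding tdet_def econj_def einv_def enorm_def emult_def by simp

context
  assumes two: "(2::'a) \<noteq> 0"
begin

lemma tdet_eq_one_imp_real:
  assumes a: "a \<noteq> (0, 0)" and one: "tdet eps a = (1, 0)"
  shows "snd a = 0"
proof -
  have "a = econj a" using tdet_emult_econj[OF a] one by (cases "econj a") (simp add: emult_real)
  then have "2 * snd a = 0" unfolding econj_def by (cases a) simp
  then show ?thesis using two by simp
qed

lemma tdet_eq_iff:
  assumes a: "a \<noteq> (0, 0)" and b: "b \<noteq> (0, 0)"
  shows "tdet eps a = tdet eps b \<longleftrightarrow> (\<exists>x. x \<noteq> 0 \<and> a = emult eps (x, 0) b)"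
proof
  assume eq: "tdet eps a = tdet eps b"
  define w where "w = emult eps a (einv eps b)"
  have w: "w \<noteq> (0, 0)"
    unfolding w_def using a einv_nonzero[OF nonsquare b] by (rule emult_nonzero[OF nonsquare])
  have aw: "a = emult eps w b"
    unfolding w_def using einv_emult[OF nonsquare b] by (simp add: emult_assoc emult_one)
  have "emult eps (tdet eps w) (tdet eps b) = tdet eps b"
    using tdet_emult[OF w b] eq aw by simp
  then have "tdet eps w = (1, 0)"
    using E.r_cancel_one[of "tdet eps b" "tdet eps w"] tdet_nonzero[OF w] tdet_nonzero[OF b] by simp
  then have "snd w = 0" using tdet_eq_one_imp_real[OF w] by simp
  then show "\<exists>x. x \<noteq> 0 \<and> a = emult eps (x, 0) b" using w aw by (metis prod.collapse)
next
  assume "\<exists>x. x \<noteq> 0 \<and> a = emult eps (x, 0) b"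
  then show "tdet eps a = tdet eps b"
    using tdet_emult[OF _ b] tdet_real by (auto simp: emult_comm[of eps "(1, 0)"] emult_one)
qed

(* Hilbert 90 made explicit: z = (1 + z) / conj (1 + z). *)
lemma tdet_one_plus:
  assumes z: "z \<in> E1 eps" and x1: "fst z \<noteq> - 1"
  shows "tdet eps (1 + fst z, snd z) = z"
proof -
  obtain x y where zz: "z = (x, y)" by (cases z)
  have n: "eps * y * y = x * x - 1" using z zz unfolding E1_def enorm_def by (simp add: algebra_simps)
  define D where "D = 2 * (1 + x)"
  have "1 + x \<noteq> 0" using x1 zz by (auto simp: add_eq_0_iff)
  then have D: "D \<noteq> 0" unfolding D_def using two by (metis mult_eq_0_iff)
  have e: "enorm eps (econj (1 + x, y)) = D"
    unfolding D_def enorm_def econj_def using n by (simp add: algebra_simps)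
  have "tdet eps (1 + x, y) = (((1 + x) * (1 + x) + eps * y * y) / D, 2 * (1 + x) * y / D)"
    unfolding tdet_def einv_def e unfolding emult_def econj_def by (simp add: field_simps D)
  also have "(1 + x) * (1 + x) + eps * y * y = x * D" unfolding D_def n by (simp add: algebra_simps)
  also have "2 * (1 + x) * y = y * D" unfolding D_def by simp
  finally show ?thesis using D zz by simp
qed

lemma tdet_surj:
  assumes z: "z \<in> E1 eps"
  shows "\<exists>a. a \<noteq> (0, 0) \<and> tdet eps a = z"
proof (cases "fst z = - 1")
  case True
  have "eps \<noteq> 0" using nonsquare by auto
  then have "snd z = 0" using z True unfolding E1_def enorm_def by simp
  moreover have "tdet eps (0, 1) = (- 1, 0)"
    unfolding tdet_def emult_def einv_def econj_def enorm_def using \<open>eps \<noteq> 0\<close> by simp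
  ultimately show ?thesis using True by (metis prod.collapse zero_neq_one prod.inject)
next
  case False
  then have "(1 + fst z, snd z) \<noteq> (0, 0)" by (auto simp: add_eq_0_iff)
  then show ?thesis using tdet_one_plus[OF z False] by blast
qed

end

end

section \<open>Factoring characters of T\<close>

(* F^x inside E^x; under a |-> t(a) it becomes the split torus S. *)
definition F_units :: "('a::field \<times> 'a) set" where
  "F_units = {(x, 0) | x. x \<noteq> 0}"

lemma F_units_subgroup:
  fixes eps :: "'a::field"
  assumes nonsquare: "\<not> (\<exists>y. y * y = eps)"
  shows "subgroup F_units (E_units eps)"
proof (rule group.subgroupI)
  show "group (E_units eps)" using comm_group.axioms(2)[OF E_units_comm_group[OF nonsquare]] .
  show "F_units \<subseteq> carrier (E_units eps)" unfolding F_units_def by auto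
  have "(1, 0) \<in> F_units" unfolding F_units_def by simp
  then show "F_units \<noteq> {}" by blast
next
  fix z :: "'a \<times> 'a" assume "z \<in> F_units"
  then obtain x where x: "x \<noteq> 0" "z = (x, 0)" unfolding F_units_def by blast
  then have "einv eps z = (inverse x, 0)" unfolding einv_def enorm_def by (simp add: field_simps)
  then show "inv\<^bsub>E_units eps\<^esub> z \<in> F_units"
    using E_units_inv[OF nonsquare] x unfolding F_units_def by simp
next
  fix z w :: "'a \<times> 'a" assume "z \<in> F_units" "w \<in> F_units"
  then show "z \<otimes>\<^bsub>E_units eps\<^esub> w \<in> F_units" unfolding F_units_def by (auto simp: emult_real)
qed

context
  fixes v :: "'a::field \<Rightarrow> int" and eps :: 'a
  assumes v_nonarch: "nonarch_local_field v"
begin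

lemma char_T_divide:
  assumes "char_T eps v \<chi>" "char_T eps v \<psi>"
  shows "char_T eps v (\<lambda>a. \<chi> a / \<psi> a)"
proof -
  obtain m n where mn: "m \<ge> 1" "n \<ge> 1" "\<forall>a\<in>Tn eps v m. \<chi> a = 1" "\<forall>a\<in>Tn eps v n. \<psi> a = 1"
    using assms unfolding char_T_def by blast
  then have "\<forall>a\<in>Tn eps v (max m n). \<chi> a = 1 \<and> \<psi> a = 1"
    using Tn_mono[OF v_nonarch, of m "max m n" eps] Tn_mono[OF v_nonarch, of n "max m n" eps] by auto
  then have "\<forall>a\<in>Tn eps v (max m n). \<chi> a / \<psi> a = 1" by simp
  then show ?thesis using assms mn(1) unfolding char_T_def by (auto intro!: exI[of _ "max m n"])
qed

lemma minimal_depth_if_agrees_on_F_units: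
  assumes depth: "true_depth v \<chi> r" and agree: "\<forall>z\<in>F_units. \<psi> z = \<chi> z"
    and triv: "\<forall>u\<in>Tn eps v (Suc r). \<psi> u = 1"
  shows "minimal_depth eps v \<psi> r"
proof -
  have S: "\<psi> (x, 0) = \<chi> (x, 0)" if "x \<in> Sn v k" for x k
    using agree Sn_nonzero[OF v_nonarch that] unfolding F_units_def by blast
  have "true_depth v \<psi> r" using depth S unfolding true_depth_def has_depth_def by metis
  moreover have "depth_T eps v \<psi> r"
    unfolding depth_T_def has_depth_def
  proof
    show "\<forall>x\<in>Tn eps v (Suc r). \<psi> x = 1" by (rule triv)
    show "(\<exists>x\<in>Tn eps v r. \<psi> x \<noteq> 1) \<or> r = 0 \<and> (\<forall>x\<in>Tn eps v 0. \<psi> x = 1)"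
    proof (cases "r = 0")
      case False
      then obtain x where "x \<in> Sn v r" "\<chi> (x, 0) \<noteq> 1"
        using depth unfolding true_depth_def has_depth_def by blast
      then show ?thesis using Sn_Tn[OF v_nonarch] S by metis
    qed blast
  qed
  ultimately show ?thesis unfolding minimal_depth_def by blast
qed

lemma char_F_units_extends_to_char_T:
  assumes eps_int: "eps \<in> pF v 0" and nonsquare: "\<not> (\<exists>y. y * y = eps)" and n: "n \<ge> 1"
    and \<psi>: "char_on (E_units eps) F_units \<psi>" and triv: "\<And>x. x \<in> Sn v n \<Longrightarrow> \<psi> (x, 0) = 1"
  shows "\<exists>\<chi>. char_T eps v \<chi> \<and> (\<forall>u\<in>Tn eps v n. \<chi> u = 1) \<and> (\<forall>z\<in>F_units. \<chi> z = \<psi> z)"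
proof -
  interpret E: comm_group "E_units eps" using nonsquare by (rule E_units_comm_group)
  have "\<psi> z = 1" if "z \<in> F_units \<inter> Tn eps v n" for z
    using that triv Tn_Sn[OF n] unfolding F_units_def by auto
  then obtain \<chi> where "char_on (E_units eps) (carrier (E_units eps)) \<chi>"
    "\<forall>z\<in>F_units. \<chi> z = \<psi> z" "\<forall>u\<in>Tn eps v n. \<chi> u = 1"
    using E.char_on_extend_trivial_on[OF F_units_subgroup[OF nonsquare]
        Tn_subgroup[OF v_nonarch eps_int n nonsquare] \<psi>]
    by blast
  then show ?thesis using n unfolding char_T_iff_char_on by blast
qed

context
  assumes odd: "odd_residual_char v" and nonsquare: "\<not> (\<exists>y. y * y = eps)"
begin

lemma E1_Tn_tdet_preimage:
  assumes n: "n \<ge> 1" and z: "z \<in> E1 eps \<inter> Tn eps v n"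
  shows "\<exists>u\<in>Tn eps v n. u \<noteq> (0, 0) \<and> tdet eps u = z"
proof -
  have two: "(2::'a) \<noteq> 0" "v 2 = 0" using odd unfolding odd_residual_char_def by auto
  obtain x y where zz: "z = (x, y)" by (cases z)
  have p: "x - 1 \<in> pF v n" "y \<in> pF v n" using z zz n by (simp_all add: Tn_iff)
  have "x \<noteq> - 1"
  proof
    assume "x = - 1"
    then have "- 2 \<in> pF v n" using p(1) by simp
    then show False using n two v_uminus[OF v_nonarch two(1)] unfolding pF_def by simp
  qed
  define u where "u = ((1 + x) / 2, y / 2)"
  have "u \<in> Tn eps v n"
  proof -
    have "(1 + x) / 2 - 1 = (x - 1) / 2" using two(1) by (simp add: field_simps)
    then have "(1 + x) / 2 - 1 \<in> pF v n" using pF_divide_unit[OF v_nonarch two p(1)] by (simp only:)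
    then show ?thesis
      using pF_divide_unit[OF v_nonarch two p(2)] n unfolding u_def by (simp add: Tn_iff)
  qed
  moreover have "1 + x \<noteq> 0" using \<open>x \<noteq> - 1\<close> by (auto simp: add_eq_0_iff)
  then have u0: "u \<noteq> (0, 0)" unfolding u_def using two(1) by simp
  moreover have "tdet eps u = z"
  proof -
    have "(1 + x, y) = emult eps (2, 0) u" unfolding u_def emult_real using two(1) by simp
    moreover have "(1 + x, y) \<noteq> (0, 0)" using \<open>1 + x \<noteq> 0\<close> by simp
    ultimately have "tdet eps (1 + x, y) = tdet eps u"
      using tdet_eq_iff[OF nonsquare two(1) _ u0] two(1) by blast
    then show ?thesis using tdet_one_plus[OF nonsquare two(1)] z zz \<open>x \<noteq> - 1\<close> by fastforce
  qed
  ultimately show ?thesis by blast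
qed

lemma char_T_constant_on_tdet_fibres:
  assumes \<psi>: "char_T eps v \<psi>" and triv: "\<forall>z\<in>F_units. \<psi> z = 1"
    and ab: "a \<noteq> (0, 0)" "b \<noteq> (0, 0)" "tdet eps a = tdet eps b"
  shows "\<psi> a = \<psi> b"
proof -
  have two: "(2::'a) \<noteq> 0" using odd unfolding odd_residual_char_def by auto
  obtain x where x: "x \<noteq> 0" "a = emult eps (x, 0) b"
    using tdet_eq_iff[OF nonsquare two ab(1,2)] ab(3) by blast
  have "(x, 0) \<noteq> (0, 0)" using x(1) by simp
  then have "\<psi> (emult eps (x, 0) b) = \<psi> (x, 0) * \<psi> b" using \<psi> ab(2) unfolding char_T_def by blast
  moreover have "\<psi> (x, 0) = 1" using triv x(1) unfolding F_units_def by blast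
  ultimately show ?thesis using x(2) by simp
qed

lemma char_T_factors_through_tdet:
  assumes \<psi>: "char_T eps v \<psi>" and triv: "\<forall>z\<in>F_units. \<psi> z = 1"
  shows "\<exists>\<phi>. char_E1 eps v \<phi> \<and> (\<forall>a. a \<noteq> (0, 0) \<longrightarrow> \<psi> a = \<phi> (tdet eps a))"
proof -
  have two: "(2::'a) \<noteq> 0" using odd unfolding odd_residual_char_def by auto
  have mult: "\<And>a b. a \<noteq> (0, 0) \<Longrightarrow> b \<noteq> (0, 0) \<Longrightarrow> \<psi> (emult eps a b) = \<psi> a * \<psi> b"
    and nonzero: "\<And>a. a \<noteq> (0, 0) \<Longrightarrow> \<psi> a \<noteq> 0" using \<psi> unfolding char_T_def by auto
  obtain n where n: "n \<ge> 1" "\<forall>a\<in>Tn eps v n. \<psi> a = 1" using \<psi> unfolding char_T_def by blast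
  note fibre = char_T_constant_on_tdet_fibres[OF \<psi> triv]
  define \<phi> where "\<phi> z = \<psi> (SOME a. a \<noteq> (0, 0) \<and> tdet eps a = z)" for z
  have \<phi>: "\<phi> (tdet eps a) = \<psi> a" if "a \<noteq> (0, 0)" for a
  proof -
    have "\<exists>b. b \<noteq> (0, 0) \<and> tdet eps b = tdet eps a" using that by blast
    from someI_ex[OF this] show ?thesis unfolding \<phi>_def using fibre that by blast
  qed
  have "char_E1 eps v \<phi>"
    unfolding char_E1_def
  proof (intro conjI ballI)
    fix z w assume "z \<in> E1 eps" "w \<in> E1 eps"
    then obtain a b where ab: "a \<noteq> (0, 0)" "b \<noteq> (0, 0)" "z = tdet eps a" "w = tdet eps b"
      using tdet_surj[OF nonsquare two] by metis
    then have "emult eps z w = tdet eps (emult eps a b)" using tdet_emult[OF nonsquare] by simp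
    then show "\<phi> (emult eps z w) = \<phi> z * \<phi> w"
      using \<phi> mult ab emult_nonzero[OF nonsquare ab(1,2)] by simp
  next
    fix z assume "z \<in> E1 eps"
    then obtain a where "a \<noteq> (0, 0)" "z = tdet eps a" using tdet_surj[OF nonsquare two] by metis
    then show "\<phi> z \<noteq> 0" using \<phi> nonzero by simp
  next
    have "\<phi> z = 1" if "z \<in> E1 eps \<inter> Tn eps v n" for z
      using E1_Tn_tdet_preimage[OF n(1) that] \<phi> n(2) by metis
    then show "\<exists>n\<ge>1. \<forall>z\<in>E1 eps \<inter> Tn eps v n. \<phi> z = 1" using n(1) by blast
  qed
  then show ?thesis using \<phi> by metis
qed

end

end

theorem theorem3p3:
  fixes v :: "'a::field \<Rightarrow> int" and eps :: 'a
    and chi :: "'a \<times> 'a \<Rightarrow> complex" and r :: nat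
  assumes "nonarch_local_field v"
    and "odd_residual_char v"
    and "eps \<noteq> 0" and "v eps = 0" and "\<not> (\<exists>y. y * y = eps)"
    and "char_T eps v chi"
    and "true_depth v chi r"
  shows "\<exists>phi chi'. char_E1 eps v phi \<and> char_T eps v chi' \<and> minimal_depth eps v chi' r \<and>
           (\<forall>a. a \<noteq> (0, 0) \<longrightarrow> chi a = phi (tdet eps a) * chi' a)"
proof -
  note v_nonarch = assms(1) and odd = assms(2) and nonsquare = assms(5)
  have eps_int: "eps \<in> pF v 0" using assms(4) unfolding pF_def by simp
  have "F_units \<subseteq> carrier (E_units eps)" by (auto simp: F_units_def)
  then have chi_F: "char_on (E_units eps) F_units chi"
    using assms(6) char_on_subset unfolding char_T_iff_char_on by blast
  have "\<forall>x\<in>Sn v (Suc r). chi (x, 0) = 1" using assms(7) unfolding true_depth_def has_depth_def by blast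
  then obtain chi' where chi': "char_T eps v chi'" "\<forall>u\<in>Tn eps v (Suc r). chi' u = 1"
      "\<forall>z\<in>F_units. chi' z = chi z"
    using char_F_units_extends_to_char_T[where n = "Suc r", OF v_nonarch eps_int nonsquare _ chi_F]
    by auto
  have "\<forall>z\<in>F_units. chi z / chi' z = 1" using chi'(3) chi_F unfolding char_on_def by simp
  then obtain phi where phi: "char_E1 eps v phi"
      "\<forall>a. a \<noteq> (0, 0) \<longrightarrow> chi a / chi' a = phi (tdet eps a)"
    using char_T_factors_through_tdet[OF v_nonarch odd nonsquare
        char_T_divide[OF v_nonarch assms(6) chi'(1)]]
    by blast
  moreover have "minimal_depth eps v chi' r"
    using minimal_depth_if_agrees_on_F_units[OF v_nonarch assms(7) chi'(3,2)] .
  moreover have "chi a = phi (tdet eps a) * chi' a" if a: "a \<noteq> (0, 0)" for a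
  proof -
    have "chi' a \<noteq> 0" using chi'(1) a unfolding char_T_def by blast
    then show ?thesis using phi(2)[rule_format, OF a] by (simp add: divide_eq_eq)
  qed
  ultimately show ?thesis using chi'(1) by blast
qed

end
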